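(* Let $\gamma\in C(\mathbb{R}_+)$. Assume there exist solutions $u^\pm\in C(\mathbb{R}_+,H^2(\mathbb{R}_+))$ of the boundary-value problems $$u^\pm_t=(1\pm\gamma(t))u^\pm_y+u^\pm_{yy}+\gamma(t)e^{-y},\ y>0;\qquad u^\pm(t,0)=0;\qquad u^\pm(t,y)\to0\text{ as } y\to\infty,$$ with initial conditions $u^\pm(0,y)=u^\pm_0(y)$, which in addition satisfy the continuity condition $u^+_y(t,0^+)=-u^-_y(t,0^+)$. Then for every $t>0$, $$\|u^+(t,\cdot)\|^2_{H^1}+\|u^-(t,\cdot)\|^2_{H^1}\le\|u^+_0\|^2_{H^1}+\|u^-_0\|^2_{H^1}.$$
   Context: $\mathbb{R}_+=(0,\infty)$; all norms are on $\mathbb{R}_+$. *)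

theory Defs
  imports "HOL-Analysis.Analysis"
begin

text \<open>All spaces are on the half-line R+ = (0,infinity). Functions of y are
  real-valued; only their values on (0,infinity) matter.\<close>

definition L2_pos :: "(real \<Rightarrow> real) \<Rightarrow> bool" where
  "L2_pos f \<longleftrightarrow> set_borel_measurable lborel {0<..} f \<and>
                  set_integrable lborel {0<..} (\<lambda>y. (f y)\<^sup>2)"

definition L2_norm_sq :: "(real \<Rightarrow> real) \<Rightarrow> real" where
  "L2_norm_sq f = (LINT y:{0<..}|lborel. (f y)\<^sup>2)"

text \<open>H^1 norm squared: the derivative of an H^1 function (absolutely continuous
  representative) exists a.e. and coincides a.e. with the weak derivative.\<close>
definition H1_norm_sq :: "(real \<Rightarrow> real) \<Rightarrow> real" where
  "H1_norm_sq f = L2_norm_sq f + L2_norm_sq (deriv f)"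

definition H2_norm_sq :: "(real \<Rightarrow> real) \<Rightarrow> real" where
  "H2_norm_sq f = L2_norm_sq f + L2_norm_sq (deriv f) + L2_norm_sq (deriv (deriv f))"

definition H2_pos :: "(real \<Rightarrow> real) \<Rightarrow> bool" where
  "H2_pos f \<longleftrightarrow> (\<forall>y>0. f differentiable (at y)) \<and> L2_pos f \<and> L2_pos (deriv f) \<and>
     (\<exists>f2. L2_pos f2 \<and>
        (\<forall>a b. 0 < a \<longrightarrow> a \<le> b \<longrightarrow> (f2 has_integral (deriv f b - deriv f a)) {a..b}))"

text \<open>Strong solution u in C([0,infinity), H^2(R+)), differentiable on (0,infinity) as
  an L^2-valued map, of
  u_t = (1 + sigma gamma(t)) u_y + u_yy + gamma(t) e^{-y}  (y > 0),
  u(t,0) = 0, u(t,y) \<rightarrow> 0 as y \<rightarrow> infinity, u(0,y) = u0(y).\<close>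
definition bvp_solution ::
  "(real \<Rightarrow> real) \<Rightarrow> real \<Rightarrow> (real \<Rightarrow> real \<Rightarrow> real) \<Rightarrow> (real \<Rightarrow> real) \<Rightarrow> bool" where
  "bvp_solution \<gamma> \<sigma> u u0 \<longleftrightarrow>
     (\<forall>t\<ge>0. H2_pos (u t)) \<and>
     (\<forall>t\<ge>0. ((\<lambda>s. H2_norm_sq (\<lambda>y. u s y - u t y)) \<longlongrightarrow> 0) (at t within {0..})) \<and>
     (\<forall>t>0. \<exists>v. L2_pos v \<and>
        ((\<lambda>s. L2_norm_sq (\<lambda>y. (u s y - u t y) / (s - t) - v y)) \<longlongrightarrow> 0) (at t) \<and>
        (AE y in lborel. y > 0 \<longrightarrow>
           v y = (1 + \<sigma> * \<gamma> t) * deriv (u t) y + deriv (deriv (u t)) y + \<gamma> t * exp (- y))) \<and>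
     (\<forall>t>0. (u t \<longlongrightarrow> 0) (at_right 0)) \<and>
     (\<forall>t>0. (u t \<longlongrightarrow> 0) at_top) \<and>
     (\<forall>y>0. u 0 y = u0 y)"

end

theory Submission
  imports Defs
begin

text \<open>Write (f, g) for the L^2 inner product on the half-line and l for the boundary slope
  u_y(t, 0+). Along a solution of u_t = (1 + \<sigma> \<gamma>) u_y + u_yy + \<gamma> e^{-y}, integration by parts
  (using u(t, 0) = 0 and the decay at infinity) gives
    (u_t, u - u_yy) = - ||u_y||^2 - ||u_yy||^2 + (1 + \<sigma> \<gamma>) l^2 / 2 + \<gamma> l,
  while convexity of the squared norm gives
    ||u(t)||_H1^2 - ||u(s)||_H1^2 \<le> 2 (u(t) - u(s), u(t) - u_yy(t)).
  Since u is only differentiable as an L^2-valued map, this bounds the upper left Dini derivative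
  of the H^1 energy by twice the first expression. For the pair u^+, u^-, whose slopes are l and
  -l, the \<gamma>-terms cancel, and what remains is nonpositive because
  l^2 = -2 (u_y, u_yy) \<le> ||u_y||^2 + ||u_yy||^2 for each of them. A continuous function whose
  upper left Dini derivative is nonpositive does not increase.\<close>

abbreviation half_line :: "real measure" where
  "half_line \<equiv> restrict_space lborel {0<..}"

abbreviation L2_inner :: "(real \<Rightarrow> real) \<Rightarrow> (real \<Rightarrow> real) \<Rightarrow> real" where
  "L2_inner f g \<equiv> integral\<^sup>L half_line (\<lambda>y. f y * g y)"

lemma half_line_sets: "{0<..} \<inter> space lborel \<in> sets (lborel :: real measure)"
  by simp

lemma L2_pos_iff: "L2_pos f \<longleftrightarrow> f \<in> borel_measurable half_line \<and> integrable half_line (\<lambda>y. (f y)\<^sup>2)"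
  unfolding L2_pos_def set_borel_measurable_def
  by (simp add: borel_measurable_restrict_space_iff set_integrable_eq)

lemma set_integral_half_line: "(LINT y:{0<..}|lborel. h y) = integral\<^sup>L half_line (h :: real \<Rightarrow> real)"
  unfolding set_lebesgue_integral_def by (rule integral_restrict_space[OF half_line_sets, symmetric])

lemma L2_norm_sq_eq: "L2_norm_sq f = integral\<^sup>L half_line (\<lambda>y. (f y)\<^sup>2)"
  unfolding L2_norm_sq_def set_integral_half_line ..

lemma L2_norm_sq_nonneg: "0 \<le> L2_norm_sq f"
  unfolding L2_norm_sq_eq by (rule integral_nonneg_AE) auto

lemma L2_norm_sq_cong: "(\<And>y. 0 < y \<Longrightarrow> f y = g y) \<Longrightarrow> L2_norm_sq f = L2_norm_sq g"
  unfolding L2_norm_sq_eq by (rule Bochner_Integration.integral_cong) (auto simp: space_restrict_space)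

lemma integrable_L2_mult:
  assumes "L2_pos f" "L2_pos g"
  shows "integrable half_line (\<lambda>y. f y * g y)"
proof (rule Bochner_Integration.integrable_bound)
  show "integrable half_line (\<lambda>y. (f y)\<^sup>2 + (g y)\<^sup>2)" "(\<lambda>y. f y * g y) \<in> borel_measurable half_line"
    using assms by (auto simp: L2_pos_iff)
  have "2 * \<bar>f y * g y\<bar> \<le> (f y)\<^sup>2 + (g y)\<^sup>2" for y
    using sum_squares_bound[of "\<bar>f y\<bar>" "\<bar>g y\<bar>"] by (simp add: abs_mult)
  then have "norm (f y * g y) \<le> norm ((f y)\<^sup>2 + (g y)\<^sup>2)" for y
    by (smt (verit) real_norm_def zero_le_power2)
  then show "AE y in half_line. norm (f y * g y) \<le> norm ((f y)\<^sup>2 + (g y)\<^sup>2)"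
    by simp
qed

lemma L2_pos_lincomb:
  assumes "L2_pos f" "L2_pos g"
  shows "L2_pos (\<lambda>y. a * f y + b * g y)"
  unfolding L2_pos_iff
proof
  show "(\<lambda>y. a * f y + b * g y) \<in> borel_measurable half_line"
    using assms by (auto simp: L2_pos_iff)
  have "integrable half_line (\<lambda>y. a\<^sup>2 * (f y)\<^sup>2 + b\<^sup>2 * (g y)\<^sup>2 + 2 * a * b * (f y * g y))"
    using assms integrable_L2_mult[OF assms] by (auto simp: L2_pos_iff)
  then show "integrable half_line (\<lambda>y. (a * f y + b * g y)\<^sup>2)"
    by (rule Bochner_Integration.integrable_cong[THEN iffD1, OF refl, rotated])
       (simp add: power2_eq_square algebra_simps)
qed

lemma L2_pos_diff: "L2_pos f \<Longrightarrow> L2_pos g \<Longrightarrow> L2_pos (\<lambda>y. f y - g y)"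
  using L2_pos_lincomb[of f g 1 "-1"] by simp

lemma L2_pos_divide: "L2_pos f \<Longrightarrow> L2_pos (\<lambda>y. f y / c)"
  using L2_pos_lincomb[of f f "1 / c" 0] by simp

lemma L2_pos_set_integrable:
  assumes "L2_pos q" "0 < a"
  shows "set_integrable lborel {a..b} q"
  unfolding set_integrable_def
proof (rule Bochner_Integration.integrable_bound)
  have "integrable lborel (\<lambda>y. indicator {0<..} y * (q y)\<^sup>2)"
    using assms(1) by (simp add: L2_pos_def set_integrable_def)
  moreover have "integrable lborel (\<lambda>y. indicator {a..b} y :: real)"
    using borel_integrable_atLeastAtMost[of a b "\<lambda>_. 1 :: real"] by simp
  ultimately show "integrable lborel (\<lambda>y. indicator {0<..} y * (q y)\<^sup>2 + indicator {a..b} y)"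
    by auto
  have q: "(\<lambda>y. indicator {0<..} y * q y) \<in> borel_measurable lborel"
    using assms(1) by (simp add: L2_pos_def set_borel_measurable_def)
  have "(\<lambda>y. indicator {a..b} y * (indicator {0<..} y * q y)) \<in> borel_measurable lborel"
    using q by measurable
  moreover have "(\<lambda>y. indicator {a..b} y * (indicator {0<..} y * q y)) = (\<lambda>y. indicator {a..b} y *\<^sub>R q y)"
    using assms(2) by (auto simp: indicator_def fun_eq_iff)
  ultimately show "(\<lambda>y. indicator {a..b} y *\<^sub>R q y) \<in> borel_measurable lborel"
    by simp
  have "\<bar>q y\<bar> \<le> (q y)\<^sup>2 + 1" for y
    using sum_squares_bound[of "\<bar>q y\<bar>" 1] by simp
  then show "AE y in lborel. norm (indicator {a..b} y *\<^sub>R q y) \<le> norm (indicator {0<..} y * (q y)\<^sup>2 + indicator {a..b} y)"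
    using assms(2) by (intro AE_I2) (auto simp: indicator_def)
qed

lemma L2_pos_exp: "L2_pos (\<lambda>y. exp (- y))"
proof -
  have "(\<lambda>y. exp (- 2 * y) :: real) absolutely_integrable_on {0..}"
    by (intro nonnegative_absolutely_integrable_1 integrable_on_exp_minus_to_infinity) auto
  then have "set_integrable lborel {0..} (\<lambda>y. exp (- 2 * y) :: real)"
    by (simp add: set_integrable_def integrable_completion)
  then have "integrable half_line (\<lambda>y. exp (- 2 * y) :: real)"
    by (auto simp: set_integrable_eq[OF half_line_sets, symmetric] elim: set_integrable_subset)
  moreover have "(\<lambda>y. exp (- 2 * y)) = (\<lambda>y. (exp (- y))\<^sup>2 :: real)"
    by (auto simp: fun_eq_iff power2_eq_square exp_add[symmetric])
  ultimately show ?thesis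
    unfolding L2_pos_iff by (auto intro!: measurable_restrict_space1)
qed

lemma L2_inner_add_left:
  "L2_pos f \<Longrightarrow> L2_pos g \<Longrightarrow> L2_pos h \<Longrightarrow> L2_inner (\<lambda>y. f y + g y) h = L2_inner f h + L2_inner g h"
  using integrable_L2_mult[of f h] integrable_L2_mult[of g h] by (simp add: distrib_right)

lemma L2_inner_diff_right:
  "L2_pos f \<Longrightarrow> L2_pos g \<Longrightarrow> L2_pos h \<Longrightarrow> L2_inner h (\<lambda>y. f y - g y) = L2_inner h f - L2_inner h g"
  using integrable_L2_mult[of h f] integrable_L2_mult[of h g] by (simp add: right_diff_distrib)

lemma L2_norm_sq_diff_le:
  assumes "L2_pos f" "L2_pos g"
  shows "L2_norm_sq f - L2_norm_sq g \<le> 2 * L2_inner (\<lambda>y. f y - g y) f"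
proof -
  have sq: "integrable half_line (\<lambda>y. (f y)\<^sup>2)" "integrable half_line (\<lambda>y. (g y)\<^sup>2)"
    using assms by (auto simp: L2_pos_iff)
  have "L2_norm_sq f - L2_norm_sq g = integral\<^sup>L half_line (\<lambda>y. (f y)\<^sup>2 - (g y)\<^sup>2)"
    using sq by (simp add: L2_norm_sq_eq)
  also have "\<dots> \<le> integral\<^sup>L half_line (\<lambda>y. 2 * ((f y - g y) * f y))"
  proof (rule integral_mono)
    show "integrable half_line (\<lambda>y. 2 * ((f y - g y) * f y))"
      using integrable_L2_mult[OF L2_pos_diff[OF assms] assms(1)] by simp
    have "0 \<le> (f y - g y)\<^sup>2" for y
      by simp
    then show "(f y)\<^sup>2 - (g y)\<^sup>2 \<le> 2 * ((f y - g y) * f y)" for y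
      by (simp add: power2_eq_square algebra_simps)
  qed (use sq in simp)
  finally show ?thesis
    by simp
qed

lemma L2_inner_abs_le:
  assumes "0 < c" "L2_pos f" "L2_pos g"
  shows "2 * \<bar>L2_inner f g\<bar> \<le> c * L2_norm_sq f + L2_norm_sq g / c"
proof -
  have sq: "integrable half_line (\<lambda>y. (f y)\<^sup>2)" "integrable half_line (\<lambda>y. (g y)\<^sup>2)"
    using assms by (auto simp: L2_pos_iff)
  have pointwise: "2 * \<bar>f y * g y\<bar> \<le> c * (f y)\<^sup>2 + (g y)\<^sup>2 / c" for y
  proof -
    have "2 * c * \<bar>f y * g y\<bar> \<le> c\<^sup>2 * (f y)\<^sup>2 + (g y)\<^sup>2"
      using sum_squares_bound[of "c * \<bar>f y\<bar>" "\<bar>g y\<bar>"] assms(1)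
      by (simp add: abs_mult power_mult_distrib)
    then show ?thesis
      using assms(1) by (simp add: field_simps power2_eq_square)
  qed
  have "2 * \<bar>L2_inner f g\<bar> \<le> integral\<^sup>L half_line (\<lambda>y. 2 * \<bar>f y * g y\<bar>)"
    using integral_abs_bound[of half_line "\<lambda>y. f y * g y"] by simp
  also have "\<dots> \<le> integral\<^sup>L half_line (\<lambda>y. c * (f y)\<^sup>2 + (g y)\<^sup>2 / c)"
    by (rule integral_mono) (use sq integrable_L2_mult[OF assms(2,3)] pointwise in auto)
  also have "\<dots> = c * L2_norm_sq f + L2_norm_sq g / c"
    using sq by (simp add: L2_norm_sq_eq)
  finally show ?thesis .
qed

lemma L2_inner_tendsto_0:
  assumes "\<forall>\<^sub>F s in F. L2_pos (d s)" "L2_pos g" "((\<lambda>s. L2_norm_sq (d s)) \<longlongrightarrow> 0) F"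
  shows "((\<lambda>s. L2_inner (d s) g) \<longlongrightarrow> 0) F"
proof (rule tendstoI)
  fix e :: real assume "0 < e"
  define c where "c = (L2_norm_sq g + 1) / e"
  have c: "0 < c" "L2_norm_sq g / c < e"
    using \<open>0 < e\<close> L2_norm_sq_nonneg[of g] by (simp_all add: c_def field_simps)
  have "\<forall>\<^sub>F s in F. L2_norm_sq (d s) < e / c"
    using assms(3) by (rule order_tendstoD) (use \<open>0 < e\<close> c in simp)
  with assms(1) show "\<forall>\<^sub>F s in F. dist (L2_inner (d s) g) 0 < e"
  proof eventually_elim
    case (elim s)
    then have "c * L2_norm_sq (d s) < e"
      using c(1) by (simp add: field_simps)
    then show ?case
      using L2_inner_abs_le[OF c(1) elim(1) assms(2)] c(2) by simp
  qed
qed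

lemma L2_inner_tendsto:
  assumes "\<forall>\<^sub>F s in F. L2_pos (w s)" "L2_pos v" "L2_pos g"
    and "((\<lambda>s. L2_norm_sq (\<lambda>y. w s y - v y)) \<longlongrightarrow> 0) F"
  shows "((\<lambda>s. L2_inner (w s) g) \<longlongrightarrow> L2_inner v g) F"
proof -
  have "\<forall>\<^sub>F s in F. L2_pos (\<lambda>y. w s y - v y)"
    using assms(1) by eventually_elim (rule L2_pos_diff[OF _ assms(2)])
  then have "((\<lambda>s. L2_inner (\<lambda>y. w s y - v y) g + L2_inner v g) \<longlongrightarrow> 0 + L2_inner v g) F"
    by (intro tendsto_add L2_inner_tendsto_0 assms tendsto_const)
  moreover have "\<forall>\<^sub>F s in F. L2_inner (\<lambda>y. w s y - v y) g + L2_inner v g = L2_inner (w s) g"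
    using assms(1)
  proof eventually_elim
    case (elim s)
    then show ?case
      using L2_inner_add_left[OF L2_pos_diff[OF elim assms(2)] assms(2,3)] by simp
  qed
  ultimately show ?thesis
    by (simp add: tendsto_cong)
qed

lemma L2_norm_sq_tendsto:
  assumes "\<forall>\<^sub>F s in F. L2_pos (w s)" "L2_pos v"
    and "((\<lambda>s. L2_norm_sq (\<lambda>y. w s y - v y)) \<longlongrightarrow> 0) F"
  shows "((\<lambda>s. L2_norm_sq (w s)) \<longlongrightarrow> L2_norm_sq v) F"
proof -
  have "((\<lambda>s. L2_norm_sq (\<lambda>y. w s y - v y) + L2_inner (w s) v + L2_inner (w s) v - L2_norm_sq v)
          \<longlongrightarrow> 0 + L2_inner v v + L2_inner v v - L2_norm_sq v) F"
    by (intro tendsto_intros assms L2_inner_tendsto)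
  moreover have "L2_inner v v = L2_norm_sq v"
    by (simp add: L2_norm_sq_eq power2_eq_square)
  moreover have "\<forall>\<^sub>F s in F. L2_norm_sq (\<lambda>y. w s y - v y) + L2_inner (w s) v + L2_inner (w s) v - L2_norm_sq v
                   = L2_norm_sq (w s)"
    using assms(1)
  proof eventually_elim
    case (elim s)
    have sq: "integrable half_line (\<lambda>y. (h y)\<^sup>2)" if "L2_pos h" for h
      using that by (simp add: L2_pos_iff)
    have "L2_norm_sq (\<lambda>y. w s y - v y) + L2_inner (w s) v + L2_inner (w s) v - L2_norm_sq v
        = integral\<^sup>L half_line (\<lambda>y. (w s y - v y)\<^sup>2 + w s y * v y + w s y * v y - (v y)\<^sup>2)"
      unfolding L2_norm_sq_eq
      by (intro has_bochner_integral_integral_eq[symmetric] has_bochner_integral_add has_bochner_integral_diff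
          has_bochner_integral_integrable sq[OF L2_pos_diff[OF elim assms(2)]] sq[OF assms(2)]
          integrable_L2_mult[OF elim assms(2)])
    also have "\<dots> = L2_norm_sq (w s)"
      unfolding L2_norm_sq_eq by (rule Bochner_Integration.integral_cong) (auto simp: power2_eq_square algebra_simps)
    finally show ?case .
  qed
  ultimately show ?thesis
    by (simp add: tendsto_cong)
qed

lemma set_integral_eq_if_has_integral:
  fixes f :: "real \<Rightarrow> real"
  assumes "set_integrable lborel S f" "(f has_integral I) S"
  shows "(LINT x:S|lborel. f x) = I"
  using set_borel_integral_eq_integral(2)[OF assms(1)] assms(2) by (simp add: integral_unique)

lemma has_integral_set_integral:
  fixes f :: "real \<Rightarrow> real"
  assumes "set_integrable lborel S f"
  shows "(f has_integral (LINT x:S|lborel. f x)) S"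
  using set_borel_integral_eq_integral[OF assms] by (simp add: has_integral_integral)

lemma integrable_lborel_pair_mult:
  fixes f g :: "real \<Rightarrow> real"
  assumes f: "integrable lborel f" and g: "integrable lborel g"
  shows "integrable (lborel \<Otimes>\<^sub>M lborel) (\<lambda>(x, y). f x * g y)"
proof (rule lborel_pair.Fubini_integrable)
  have [measurable]: "f \<in> borel_measurable lborel" "g \<in> borel_measurable lborel"
    using f g by auto
  show "(\<lambda>(x, y). f x * g y) \<in> borel_measurable (lborel \<Otimes>\<^sub>M lborel)"
    by measurable
  have "integrable lborel (\<lambda>x. \<bar>f x\<bar> * (\<integral>y. \<bar>g y\<bar> \<partial>lborel))"
    using f by (intro integrable_mult_left integrable_abs)
  then show "integrable lborel (\<lambda>x. \<integral>y. norm (case (x, y) of (x, y) \<Rightarrow> f x * g y) \<partial>lborel)"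
    by (simp add: abs_mult)
  show "AE x in lborel. integrable lborel (\<lambda>y. case (x, y) of (x, y) \<Rightarrow> f x * g y)"
    using g by (auto intro!: integrable_mult_right)
qed

lemma set_integral_Icc_swap:
  fixes Q g :: "real \<Rightarrow> real"
  assumes Q: "set_integrable lborel {a..b} Q" and g: "set_integrable lborel {a..b} g"
  shows "set_integrable lborel {a..b} (\<lambda>x. Q x * (LINT y:{a..x}|lborel. g y))"
    and "set_integrable lborel {a..b} (\<lambda>y. g y * (LINT x:{y..b}|lborel. Q x))"
    and "(LINT x:{a..b}|lborel. Q x * (LINT y:{a..x}|lborel. g y))
           = (LINT y:{a..b}|lborel. g y * (LINT x:{y..b}|lborel. Q x))"
proof -
  define Qa where "Qa = (\<lambda>x. indicator {a..b} x * Q x)"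
  define ga where "ga = (\<lambda>y. indicator {a..b} y * g y)"
  have Qa: "integrable lborel Qa" and ga: "integrable lborel ga"
    using Q g by (simp_all add: set_integrable_def Qa_def ga_def)
  then have [measurable]: "Qa \<in> borel_measurable lborel" "ga \<in> borel_measurable lborel"
    by auto
  note prod = integrable_lborel_pair_mult[OF Qa ga]
  define f where "f x y = (if y \<le> x then Qa x * ga y else 0)" for x y
  have f: "integrable (lborel \<Otimes>\<^sub>M lborel) (case_prod f)"
  proof (rule Bochner_Integration.integrable_bound[OF prod])
    show "case_prod f \<in> borel_measurable (lborel \<Otimes>\<^sub>M lborel)"
      unfolding f_def by measurable
  qed (auto simp: f_def)
  have inner_x: "(\<integral>y. f x y \<partial>lborel) = indicator {a..b} x * (Q x * (LINT y:{a..x}|lborel. g y))" for x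
  proof -
    have "f x y = indicator {a..b} x * (Q x * (indicator {a..x} y * g y))" for y
      by (auto simp: f_def Qa_def ga_def indicator_def)
    then show ?thesis
      by (simp add: set_lebesgue_integral_def)
  qed
  have inner_y: "(\<integral>x. f x y \<partial>lborel) = indicator {a..b} y * (g y * (LINT x:{y..b}|lborel. Q x))" for y
  proof -
    have "f x y = indicator {a..b} y * (g y * (indicator {y..b} x * Q x))" for x
      by (auto simp: f_def Qa_def ga_def indicator_def)
    then show ?thesis
      by (simp add: set_lebesgue_integral_def)
  qed
  show "set_integrable lborel {a..b} (\<lambda>x. Q x * (LINT y:{a..x}|lborel. g y))"
    using lborel_pair.integrable_fst[OF f] by (simp add: set_integrable_def inner_x)
  show "set_integrable lborel {a..b} (\<lambda>y. g y * (LINT x:{y..b}|lborel. Q x))"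
    using lborel_pair.integrable_snd[OF f] by (simp add: set_integrable_def inner_y)
  show "(LINT x:{a..b}|lborel. Q x * (LINT y:{a..x}|lborel. g y))
          = (LINT y:{a..b}|lborel. g y * (LINT x:{y..b}|lborel. Q x))"
    using lborel_pair.Fubini_integral[OF f] by (simp add: set_lebesgue_integral_def inner_x inner_y)
qed

lemma set_integral_Icc_upper_eq:
  fixes P Q :: "real \<Rightarrow> real"
  assumes Q: "set_integrable lborel {a..b} Q"
    and P: "\<And>x. a \<le> x \<Longrightarrow> x \<le> b \<Longrightarrow> (Q has_integral (P x - P a)) {a..x}"
    and "y \<in> {a..b}"
  shows "(LINT x:{y..b}|lborel. Q x) = P b - P y"
proof -
  have "(LINT x:{y..b}|lborel. Q x) = integral {y..b} Q"
    using assms(3) by (intro set_borel_integral_eq_integral(2) set_integrable_subset[OF Q]) auto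
  also have "\<dots> = integral {a..b} Q - integral {a..y} Q"
    using Henstock_Kurzweil_Integration.integral_combine[of a y b Q] assms(3)
      set_borel_integral_eq_integral(1)[OF Q] by simp
  also have "\<dots> = P b - P y"
    using P[of b] P[of y] assms(3) by (simp add: integral_unique)
  finally show ?thesis .
qed

text \<open>P and G are only absolutely continuous, so the library's integration by parts, which needs
  derivatives everywhere, does not apply; instead the order of integration is swapped.\<close>

lemma integration_by_parts_Icc:
  fixes P Q G g :: "real \<Rightarrow> real"
  assumes "a \<le> b"
    and P: "\<And>x. a \<le> x \<Longrightarrow> x \<le> b \<Longrightarrow> (Q has_integral (P x - P a)) {a..x}"
    and G: "\<And>x. a \<le> x \<Longrightarrow> x \<le> b \<Longrightarrow> (g has_integral (G x - G a)) {a..x}"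
    and Q: "set_integrable lborel {a..b} Q" and g: "set_integrable lborel {a..b} g"
  shows "((\<lambda>x. P x * g x + Q x * G x) has_integral (P b * G b - P a * G a)) {a..b}"
proof -
  have G_eq: "(LINT y:{a..x}|lborel. g y) = G x - G a" if "x \<in> {a..b}" for x
    using that by (intro set_integral_eq_if_has_integral G set_integrable_subset[OF g]) auto
  have P_eq: "(LINT x:{y..b}|lborel. Q x) = P b - P y" if "y \<in> {a..b}" for y
    using set_integral_Icc_upper_eq[OF Q P that] .
  note swap = set_integral_Icc_swap[OF Q g]
  have QG: "set_integrable lborel {a..b} (\<lambda>x. Q x * (G x - G a))"
    using swap(1) by (rule set_integrable_cong[THEN iffD1, rotated 3]) (simp_all add: G_eq)
  have gP: "set_integrable lborel {a..b} (\<lambda>y. g y * (P b - P y))"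
    using swap(2) by (rule set_integrable_cong[THEN iffD1, rotated 3]) (simp_all add: P_eq)
  define I where "I = (LINT x:{a..b}|lborel. Q x * (G x - G a))"
  have "I = (LINT x:{a..b}|lborel. Q x * (LINT y:{a..x}|lborel. g y))"
    unfolding I_def by (rule set_lebesgue_integral_cong) (simp_all add: G_eq)
  also have "\<dots> = (LINT y:{a..b}|lborel. g y * (LINT x:{y..b}|lborel. Q x))"
    by (rule swap(3))
  also have "\<dots> = (LINT y:{a..b}|lborel. g y * (P b - P y))"
    by (rule set_lebesgue_integral_cong) (simp_all add: P_eq)
  finally have "((\<lambda>y. g y * (P b - P y)) has_integral I) {a..b}"
    using has_integral_set_integral[OF gP] by simp
  moreover have "((\<lambda>x. Q x * (G x - G a)) has_integral I) {a..b}"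
    unfolding I_def by (rule has_integral_set_integral[OF QG])
  ultimately have "((\<lambda>x. (Q x * (G x - G a) - g x * (P b - P x)) + (P b * g x + G a * Q x)) has_integral
      ((I - I) + (P b * (G b - G a) + G a * (P b - P a)))) {a..b}"
    using G[of b] P[of b] \<open>a \<le> b\<close>
    by (intro has_integral_add has_integral_diff has_integral_mult_right) auto
  moreover have "(\<lambda>x. (Q x * (G x - G a) - g x * (P b - P x)) + (P b * g x + G a * Q x))
      = (\<lambda>x. P x * g x + Q x * G x)"
    by (simp add: fun_eq_iff algebra_simps)
  moreover have "(I - I) + (P b * (G b - G a) + G a * (P b - P a)) = P b * G b - P a * G a"
    by (simp add: algebra_simps)
  ultimately show ?thesis
    by (simp only:)
qed

lemma half_line_exhaustion:
  shows "0 < 1 / (real n + 2)" "1 / (real n + 2) < real n + 2"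
    and "filterlim (\<lambda>n::nat. 1 / (real n + 2)) (at_right 0) sequentially"
    and "filterlim (\<lambda>n::nat. real n + 2) at_top sequentially"
proof -
  show "0 < 1 / (real n + 2)"
    by simp
  have "1 / (real n + 2) < 1" "1 < real n + 2"
    by simp_all
  then show "1 / (real n + 2) < real n + 2"
    by linarith
  show top: "filterlim (\<lambda>n::nat. real n + 2) at_top sequentially"
    using filterlim_tendsto_add_at_top[OF tendsto_const filterlim_real_sequentially, of 2]
    by (simp add: add.commute)
  have "(\<lambda>n::nat. 1 / (real n + 2)) \<longlonglongrightarrow> 0"
    by (rule tendsto_divide_0[OF tendsto_const filterlim_at_top_imp_at_infinity[OF top]])
  then show "filterlim (\<lambda>n::nat. 1 / (real n + 2)) (at_right 0) sequentially"
    by (intro tendsto_imp_filterlim_at_right) auto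
qed

lemma set_integral_half_line_approx:
  fixes h :: "real \<Rightarrow> real"
  assumes "set_integrable lborel {0<..} h"
  shows "(\<lambda>n. LINT y:{1 / (real n + 2)..real n + 2}|lborel. h y) \<longlonglongrightarrow> (LINT y:{0<..}|lborel. h y)"
proof -
  define l where "l = (\<lambda>n::nat. 1 / (real n + 2))"
  define u where "u = (\<lambda>n::nat. real n + 2)"
  have lu: "0 < l n" "l n < u n" for n
    using half_line_exhaustion(1,2)[of n] by (simp_all add: l_def u_def)
  have eint: "einterval 0 \<infinity> = {0<..}"
    by (auto simp: einterval_def)
  have "einterval 0 \<infinity> = (\<Union>n. {l n..u n})"
  proof (intro equalityI subsetI)
    fix x assume "x \<in> einterval 0 \<infinity>"
    then have "0 < x"
      by (simp add: einterval_def)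
    obtain n :: nat where n: "max x (1 / x) < real n"
      using reals_Archimedean2 by blast
    then have "1 / (real n + 2) \<le> x"
      using \<open>0 < x\<close> by (simp add: field_simps)
    with n show "x \<in> (\<Union>n. {l n..u n})"
      by (auto simp: l_def u_def)
  qed (use lu in \<open>auto simp: einterval_def intro: less_le_trans\<close>)
  moreover have "incseq u" "decseq l"
    by (auto simp: incseq_def decseq_def l_def u_def frac_le)
  moreover have "(\<lambda>n. ereal (u n)) \<longlonglongrightarrow> \<infinity>"
    using half_line_exhaustion(4) by (simp add: u_def tendsto_PInfty_eq_at_top)
  moreover have "(\<lambda>n. ereal (l n)) \<longlonglongrightarrow> 0"
    using half_line_exhaustion(3) by (simp add: l_def zero_ereal_def filterlim_at)
  ultimately have "(\<lambda>n. LBINT y=l n..u n. h y) \<longlonglongrightarrow> (LBINT y=0..\<infinity>. h y)"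
    using assms lu unfolding eint[symmetric]
    by (intro interval_integral_Icc_approx_integrable) (auto simp: zero_ereal_def)
  then show ?thesis
    using lu by (simp add: interval_integral_Icc less_imp_le interval_lebesgue_integral_0_infty l_def u_def)
qed

lemma integration_by_parts_half_line:
  fixes P Q G g :: "real \<Rightarrow> real"
  assumes P: "\<And>x y. 0 < x \<Longrightarrow> x \<le> y \<Longrightarrow> (Q has_integral (P y - P x)) {x..y}"
    and G: "\<And>x y. 0 < x \<Longrightarrow> x \<le> y \<Longrightarrow> (g has_integral (G y - G x)) {x..y}"
    and Q: "\<And>x y. 0 < x \<Longrightarrow> set_integrable lborel {x..y} Q"
    and g: "\<And>x y. 0 < x \<Longrightarrow> set_integrable lborel {x..y} g"
    and h: "set_integrable lborel {0<..} (\<lambda>y. P y * g y + Q y * G y)"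
    and A: "((\<lambda>y. P y * G y) \<longlongrightarrow> A) (at_right 0)"
    and B: "((\<lambda>y. P y * G y) \<longlongrightarrow> B) at_top"
  shows "(LINT y:{0<..}|lborel. P y * g y + Q y * G y) = B - A"
proof -
  define a where "a = (\<lambda>n::nat. 1 / (real n + 2))"
  define b where "b = (\<lambda>n::nat. real n + 2)"
  have ab: "0 < a n" "a n \<le> b n" for n
    using half_line_exhaustion(1,2)[of n] by (simp_all add: a_def b_def)
  note a_0 = half_line_exhaustion(3)[folded a_def] and b_top = half_line_exhaustion(4)[folded b_def]
  have "(LINT y:{a n..b n}|lborel. P y * g y + Q y * G y) = P (b n) * G (b n) - P (a n) * G (a n)" for n
  proof (rule set_integral_eq_if_has_integral)
    show "set_integrable lborel {a n..b n} (\<lambda>y. P y * g y + Q y * G y)"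
      by (rule set_integrable_subset[OF h]) (use ab[of n] in auto)
    show "((\<lambda>y. P y * g y + Q y * G y) has_integral (P (b n) * G (b n) - P (a n) * G (a n))) {a n..b n}"
      by (rule integration_by_parts_Icc) (use ab[of n] in \<open>auto intro: P G Q g\<close>)
  qed
  then have "(\<lambda>n. LINT y:{a n..b n}|lborel. P y * g y + Q y * G y) \<longlonglongrightarrow> B - A"
    using filterlim_compose[OF B b_top] filterlim_compose[OF A a_0] by (simp add: tendsto_diff)
  moreover have "(\<lambda>n. LINT y:{a n..b n}|lborel. P y * g y + Q y * G y) \<longlonglongrightarrow>
      (LINT y:{0<..}|lborel. P y * g y + Q y * G y)"
    using set_integral_half_line_approx[OF h] by (simp add: a_def b_def)
  ultimately have "B - A = (LINT y:{0<..}|lborel. P y * g y + Q y * G y)"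
    by (rule LIMSEQ_unique)
  then show ?thesis
    by simp
qed

lemma L2_integration_by_parts:
  fixes P Q G g :: "real \<Rightarrow> real"
  assumes "\<And>x y. 0 < x \<Longrightarrow> x \<le> y \<Longrightarrow> (Q has_integral (P y - P x)) {x..y}"
    and "\<And>x y. 0 < x \<Longrightarrow> x \<le> y \<Longrightarrow> (g has_integral (G y - G x)) {x..y}"
    and "L2_pos P" "L2_pos Q" "L2_pos G" "L2_pos g"
    and "((\<lambda>y. P y * G y) \<longlongrightarrow> A) (at_right 0)" "((\<lambda>y. P y * G y) \<longlongrightarrow> B) at_top"
  shows "L2_inner P g + L2_inner Q G = B - A"
proof -
  have "integrable half_line (\<lambda>y. P y * g y)" "integrable half_line (\<lambda>y. Q y * G y)"
    using assms(3-6) by (simp_all add: integrable_L2_mult)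
  moreover from this have "(LINT y:{0<..}|lborel. P y * g y + Q y * G y) = B - A"
    by (intro integration_by_parts_half_line)
       (use assms in \<open>auto simp: set_integrable_eq[OF half_line_sets] intro: L2_pos_set_integrable\<close>)
  ultimately show ?thesis
    by (simp add: set_integral_half_line)
qed

lemma has_integral_deriv_pos:
  assumes "\<And>y. 0 < y \<Longrightarrow> (f has_real_derivative f' y) (at y)" "0 < x" "x \<le> y"
  shows "(f' has_integral (f y - f x)) {x..y}"
proof (rule fundamental_theorem_of_calculus[OF assms(3)])
  fix z assume "z \<in> {x..y}"
  then have "0 < z"
    using assms(2) by auto
  then show "(f has_vector_derivative f' z) (at z within {x..y})"
    using assms(1) by (auto simp: has_real_derivative_iff_has_vector_derivative intro: has_vector_derivative_at_within)
qed

lemma negligible_right_average_tendsto: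
  fixes F :: "real \<Rightarrow> real"
  assumes "\<And>c d. F integrable_on {c..d}"
  obtains N where "negligible N" "\<And>x. x \<notin> N \<Longrightarrow> ((\<lambda>h. integral {x..x + h} F / h) \<longlongrightarrow> F x) (at_right 0)"
proof -
  obtain N where N: "negligible N"
    "\<And>x e. x \<notin> N \<Longrightarrow> 0 < e \<Longrightarrow> \<exists>d>0. \<forall>h. 0 < h \<and> h < d \<longrightarrow>
        norm (integral (cbox x (x + h *\<^sub>R One)) F /\<^sub>R h ^ DIM(real) - F x) < e"
    using integrable_ccontinuous_explicit[of F] assms by auto
  have "((\<lambda>h. integral {x..x + h} F / h) \<longlongrightarrow> F x) (at_right 0)" if "x \<notin> N" for x
    unfolding tendsto_iff eventually_at_right_field
    using N(2)[OF that] by (simp add: dist_real_def divide_inverse mult.commute) blast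
  with N(1) show ?thesis
    using that by blast
qed

lemma has_real_derivative_if_averages_tendsto:
  fixes p F :: "real \<Rightarrow> real"
  assumes p: "\<And>c d. a \<le> c \<Longrightarrow> c \<le> d \<Longrightarrow> d \<le> b \<Longrightarrow> integral {c..d} F = p d - p c"
    and "a < x" "x < b"
    and right: "((\<lambda>h. integral {x..x + h} F / h) \<longlongrightarrow> F x) (at_right 0)"
    and left: "((\<lambda>h. integral {- x..- x + h} (\<lambda>y. F (- y)) / h) \<longlongrightarrow> F x) (at_right 0)"
  shows "(p has_real_derivative F x) (at x)"
proof -
  have "\<forall>\<^sub>F h in at_right 0. integral {x..x + h} F / h = (p (x + h) - p x) / h"
    unfolding eventually_at_right_field
    by (rule exI[of _ "b - x"]) (use \<open>a < x\<close> \<open>x < b\<close> p in auto)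
  with right have R: "((\<lambda>h. (p (x + h) - p x) / h) \<longlongrightarrow> F x) (at_right 0)"
    by (rule Lim_transform_eventually)
  have "integral {- x..- x + h} (\<lambda>y. F (- y)) / h = (p (x + - h) - p x) / - h"
    if "0 < h" "h < x - a" for h
  proof -
    have "integral {- x..- x + h} (\<lambda>y. F (- y)) = integral {x - h..x} F"
      using Henstock_Kurzweil_Integration.integral_reflect_real[of x "x - h" F] by simp
    also have "\<dots> = p x - p (x - h)"
      using that \<open>x < b\<close> by (intro p) auto
    finally show ?thesis
      using that by (simp add: field_simps)
  qed
  then have "\<forall>\<^sub>F h in at_right 0. integral {- x..- x + h} (\<lambda>y. F (- y)) / h = (p (x + - h) - p x) / - h"
    unfolding eventually_at_right_field by (intro exI[of _ "x - a"]) (use \<open>a < x\<close> in auto)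
  with left have "((\<lambda>h. (p (x + - h) - p x) / - h) \<longlongrightarrow> F x) (at_right 0)"
    by (rule Lim_transform_eventually)
  then have L: "((\<lambda>h. (p (x + h) - p x) / h) \<longlongrightarrow> F x) (at_left 0)"
    by (simp add: filterlim_at_left_to_right)
  show ?thesis
    unfolding DERIV_def by (rule filterlim_split_at[OF L R])
qed

lemma has_real_derivative_indefinite_integral_AE:
  fixes p q :: "real \<Rightarrow> real"
  assumes q: "set_integrable lborel {a..b} q"
    and p: "\<And>x y. a \<le> x \<Longrightarrow> x \<le> y \<Longrightarrow> y \<le> b \<Longrightarrow> (q has_integral (p y - p x)) {x..y}"
  shows "AE x in lborel. a < x \<longrightarrow> x < b \<longrightarrow> (p has_real_derivative q x) (at x)"
proof -
  define F where "F = (\<lambda>x. indicator {a..b} x * q x)"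
  have "integrable lborel F"
    using q by (simp add: F_def set_integrable_def)
  then have "set_integrable lborel {c..d} F" for c d
    unfolding set_integrable_def by (rule integrable_mult_indicator[rotated]) simp
  then have F_int: "F integrable_on {c..d}" for c d
    by (rule set_borel_integral_eq_integral(1))
  obtain N1 where N1: "negligible N1"
    and right: "\<And>x. x \<notin> N1 \<Longrightarrow> ((\<lambda>h. integral {x..x + h} F / h) \<longlongrightarrow> F x) (at_right 0)"
    using negligible_right_average_tendsto[OF F_int] by blast
  have "(\<lambda>x. F (- x)) integrable_on {c..d}" for c d
    using Henstock_Kurzweil_Integration.integrable_reflect_real[of F "-c" "-d"] F_int by simp
  then obtain N2 where N2: "negligible N2"
    and left: "\<And>x. x \<notin> N2 \<Longrightarrow> ((\<lambda>h. integral {x..x + h} (\<lambda>x. F (- x)) / h) \<longlongrightarrow> F (- x)) (at_right 0)"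
    using negligible_right_average_tendsto by blast
  have F_eq: "integral {c..d} F = p d - p c" if "a \<le> c" "c \<le> d" "d \<le> b" for c d
  proof -
    have "integral {c..d} F = integral {c..d} q"
      by (rule integral_cong) (use that in \<open>simp add: F_def\<close>)
    then show ?thesis
      using p[OF that] by (simp add: integral_unique)
  qed
  have "negligible (uminus ` N2 :: real set)"
    by (rule negligible_differentiable_image_negligible[OF _ N2])
       (simp_all add: linear_imp_differentiable_on linear_uminus)
  then have "AE x in lebesgue. x \<notin> N1 \<union> uminus ` N2"
    using N1 by (intro AE_not_in) (simp add: negligible_iff_null_sets[symmetric])
  then have "AE x in lborel. x \<notin> N1 \<union> uminus ` N2"
    by (simp add: AE_completion_iff)
  then show ?thesis
  proof eventually_elim
    fix x assume x: "x \<notin> N1 \<union> uminus ` N2"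
    then have "- x \<notin> N2"
      by (metis UnI2 image_eqI minus_minus)
    then have "(p has_real_derivative F x) (at x)" if "a < x" "x < b"
      using x that left[of "- x"] right[of x] by (intro has_real_derivative_if_averages_tendsto[OF F_eq]) auto
    then show "a < x \<longrightarrow> x < b \<longrightarrow> (p has_real_derivative q x) (at x)"
      by (simp add: F_def)
  qed
qed

lemma has_real_derivative_indefinite_integral_half_line_AE:
  fixes p q :: "real \<Rightarrow> real"
  assumes "\<And>x y. 0 < x \<Longrightarrow> set_integrable lborel {x..y} q"
    and "\<And>x y. 0 < x \<Longrightarrow> x \<le> y \<Longrightarrow> (q has_integral (p y - p x)) {x..y}"
  shows "AE x in lborel. 0 < x \<longrightarrow> (p has_real_derivative q x) (at x)"
proof -
  have "AE x in lborel. 1 / real (Suc n) < x \<longrightarrow> x < real (Suc n) \<longrightarrow> (p has_real_derivative q x) (at x)"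
    for n
  proof (rule has_real_derivative_indefinite_integral_AE)
    have pos: "0 < 1 / real (Suc n)"
      by simp
    show "set_integrable lborel {1 / real (Suc n)..real (Suc n)} q"
      by (rule assms(1)[OF pos])
    show "(q has_integral (p y - p x)) {x..y}" if "1 / real (Suc n) \<le> x" "x \<le> y" "y \<le> real (Suc n)" for x y
      using assms(2) that less_le_trans[OF pos] by blast
  qed
  then have "AE x in lborel. \<forall>n::nat. 1 / real (Suc n) < x \<longrightarrow> x < real (Suc n) \<longrightarrow> (p has_real_derivative q x) (at x)"
    unfolding AE_all_countable ..
  then show ?thesis
  proof eventually_elim
    fix x :: real assume deriv: "\<forall>n::nat. 1 / real (Suc n) < x \<longrightarrow> x < real (Suc n) \<longrightarrow> (p has_real_derivative q x) (at x)"
    show "0 < x \<longrightarrow> (p has_real_derivative q x) (at x)"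
    proof
      assume "0 < x"
      obtain n :: nat where n: "max x (1 / x) < real n"
        using reals_Archimedean2 by blast
      then have "1 / real (Suc n) < x"
        using \<open>0 < x\<close> by (simp add: field_simps)
      with n show "(p has_real_derivative q x) (at x)"
        using deriv by simp
    qed
  qed
qed

lemma set_integrable_tendsto_at_top_eq_0:
  fixes f :: "real \<Rightarrow> real"
  assumes f: "set_integrable lborel {a..} f" and lim: "(f \<longlongrightarrow> L) at_top"
  shows "L = 0"
proof (rule ccontr)
  assume "L \<noteq> 0"
  then have "\<forall>\<^sub>F x in at_top. \<bar>L\<bar> / 2 < \<bar>f x\<bar>"
    using tendsto_rabs[OF lim] by (intro order_tendstoD(1)) auto
  then obtain R0 where R0: "\<And>x. R0 \<le> x \<Longrightarrow> \<bar>L\<bar> / 2 < \<bar>f x\<bar>"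
    by (auto simp: eventually_at_top_linorder)
  define R where "R = max R0 a"
  define C where "C = (LINT x:{a..}|lborel. \<bar>f x\<bar>)"
  define b where "b = R + 2 * (C + 1) / \<bar>L\<bar>"
  have f_abs: "set_integrable lborel {a..} (\<lambda>x. \<bar>f x\<bar>)"
    using f by (rule set_integrable_abs)
  have "0 \<le> C"
    unfolding C_def set_lebesgue_integral_def by (rule integral_nonneg_AE) auto
  then have "R \<le> b"
    by (simp add: b_def)
  have fR: "set_integrable lborel {R..b} (\<lambda>x. \<bar>f x\<bar>)"
    by (rule set_integrable_subset[OF f_abs]) (auto simp: R_def)
  have "C + 1 = (b - R) * (\<bar>L\<bar> / 2)"
    using \<open>L \<noteq> 0\<close> by (simp add: b_def)
  also have "\<dots> = integral {R..b} (\<lambda>x. \<bar>L\<bar> / 2)"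
    using \<open>R \<le> b\<close> by simp
  also have "\<dots> \<le> integral {R..b} (\<lambda>x. \<bar>f x\<bar>)"
    by (rule integral_le) (use set_borel_integral_eq_integral(1)[OF fR] R0 in \<open>auto simp: R_def intro: less_imp_le\<close>)
  also have "\<dots> = (LINT x:{R..b}|lborel. \<bar>f x\<bar>)"
    by (rule set_borel_integral_eq_integral(2)[OF fR, symmetric])
  also have "\<dots> \<le> C"
    unfolding C_def set_lebesgue_integral_def
    by (rule integral_mono) (use fR f_abs in \<open>auto simp: set_integrable_def indicator_def R_def\<close>)
  finally show False
    by simp
qed

lemma L2_pos_tendsto_0_at_top:
  assumes p: "L2_pos p" and q: "L2_pos q"
    and FTC: "\<And>x y. 0 < x \<Longrightarrow> x \<le> y \<Longrightarrow> (q has_integral (p y - p x)) {x..y}"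
  shows "(p \<longlongrightarrow> 0) at_top"
proof -
  define h where "h = (\<lambda>y. p y * q y + q y * p y)"
  have "set_integrable lborel {0<..} h"
    unfolding h_def set_integrable_eq[OF half_line_sets]
    using integrable_L2_mult[OF p q] integrable_L2_mult[OF q p] by simp
  then have h: "set_integrable lborel {1..} h"
    by (rule set_integrable_subset) auto
  have "(p 1)\<^sup>2 + (LINT y:{1..b}|lborel. h y) = (p b)\<^sup>2" if "1 \<le> b" for b
  proof -
    have FTC1: "(q has_integral (p x - p 1)) {1..x}" if "1 \<le> x" for x
      using FTC that by simp
    have q1: "set_integrable lborel {1..b} q"
      by (rule L2_pos_set_integrable[OF q]) simp
    have "(h has_integral (p b * p b - p 1 * p 1)) {1..b}"
      unfolding h_def using integration_by_parts_Icc[OF that FTC1 FTC1 q1 q1] by simp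
    then have "(LINT y:{1..b}|lborel. h y) = p b * p b - p 1 * p 1"
      by (intro set_integral_eq_if_has_integral set_integrable_subset[OF h]) auto
    then show ?thesis
      by (simp add: power2_eq_square)
  qed
  then have "\<forall>\<^sub>F b in at_top. (p 1)\<^sup>2 + (LINT y:{1..b}|lborel. h y) = (p b)\<^sup>2"
    by (rule eventually_at_top_linorderI)
  moreover have "((\<lambda>b. (p 1)\<^sup>2 + (LINT y:{1..b}|lborel. h y)) \<longlongrightarrow> (p 1)\<^sup>2 + (LINT y:{1..}|lborel. h y)) at_top"
    by (intro tendsto_add tendsto_const tendsto_set_lebesgue_integral_at_top h) simp
  ultimately have lim: "((\<lambda>b. (p b)\<^sup>2) \<longlongrightarrow> (p 1)\<^sup>2 + (LINT y:{1..}|lborel. h y)) at_top"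
    by (rule Lim_transform_eventually[rotated])
  have "set_integrable lborel {1..} (\<lambda>y. (p y)\<^sup>2)"
    by (rule set_integrable_subset[of _ "{0<..}"]) (use p in \<open>auto simp: L2_pos_def\<close>)
  from set_integrable_tendsto_at_top_eq_0[OF this lim] lim
  have "((\<lambda>b. sqrt ((p b)\<^sup>2)) \<longlongrightarrow> sqrt 0) at_top"
    by (intro tendsto_real_sqrt) simp
  then show ?thesis
    by (simp add: tendsto_rabs_zero_iff)
qed

text \<open>f2 plays the role of f'': deriv f need not be differentiable everywhere.\<close>

definition H2_dirichlet :: "(real \<Rightarrow> real) \<Rightarrow> (real \<Rightarrow> real) \<Rightarrow> bool" where
  "H2_dirichlet f f2 \<longleftrightarrow> (\<forall>y>0. (f has_real_derivative deriv f y) (at y)) \<and>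
     L2_pos f \<and> L2_pos (deriv f) \<and> L2_pos f2 \<and>
     (\<forall>x y. 0 < x \<longrightarrow> x \<le> y \<longrightarrow> (f2 has_integral (deriv f y - deriv f x)) {x..y}) \<and>
     (f \<longlongrightarrow> 0) (at_right 0) \<and> (f \<longlongrightarrow> 0) at_top"

context
  fixes f f2 :: "real \<Rightarrow> real"
  assumes H: "H2_dirichlet f f2"
begin

lemma H2_dirichlet_L2: "L2_pos f" "L2_pos (deriv f)" "L2_pos f2"
  using H by (simp_all add: H2_dirichlet_def)

lemma H2_dirichlet_has_integral:
  assumes "0 < x" "x \<le> y"
  shows "(deriv f has_integral (f y - f x)) {x..y}" "(f2 has_integral (deriv f y - deriv f x)) {x..y}"
  using H assms by (auto simp: H2_dirichlet_def intro: has_integral_deriv_pos)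

lemma H2_dirichlet_tendsto: "(f \<longlongrightarrow> 0) (at_right 0)" "(f \<longlongrightarrow> 0) at_top" "(deriv f \<longlongrightarrow> 0) at_top"
  using H L2_pos_tendsto_0_at_top[OF H2_dirichlet_L2(2,3) H2_dirichlet_has_integral(2)]
  by (simp_all add: H2_dirichlet_def)

lemma H2_dirichlet_second_deriv_AE: "AE y in lborel. 0 < y \<longrightarrow> deriv (deriv f) y = f2 y"
proof -
  have "AE y in lborel. 0 < y \<longrightarrow> (deriv f has_real_derivative f2 y) (at y)"
    by (rule has_real_derivative_indefinite_integral_half_line_AE)
       (auto intro: L2_pos_set_integrable H2_dirichlet_L2 H2_dirichlet_has_integral)
  then show ?thesis
    by eventually_elim (auto intro: DERIV_imp_deriv)
qed

lemma L2_inner_self_deriv: "L2_inner f (deriv f) = 0"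
proof -
  have "L2_inner f (deriv f) + L2_inner (deriv f) f = 0 - 0"
    using tendsto_mult[OF H2_dirichlet_tendsto(1) H2_dirichlet_tendsto(1)]
      tendsto_mult[OF H2_dirichlet_tendsto(2) H2_dirichlet_tendsto(2)]
    by (intro L2_integration_by_parts H2_dirichlet_has_integral H2_dirichlet_L2) simp_all
  then show ?thesis
    by (simp add: mult.commute)
qed

context
  fixes l :: real
  assumes slope: "(deriv f \<longlongrightarrow> l) (at_right 0)"
begin

lemma L2_inner_second_deriv_self: "L2_inner f2 f = - L2_norm_sq (deriv f)"
proof -
  have "L2_inner (deriv f) (deriv f) + L2_inner f2 f = 0 - 0"
    using tendsto_mult[OF slope H2_dirichlet_tendsto(1)]
      tendsto_mult[OF H2_dirichlet_tendsto(3) H2_dirichlet_tendsto(2)]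
    by (intro L2_integration_by_parts H2_dirichlet_has_integral H2_dirichlet_L2) simp_all
  then show ?thesis
    by (simp add: L2_norm_sq_eq power2_eq_square)
qed

lemma L2_inner_deriv_second_deriv: "L2_inner (deriv f) f2 = - l\<^sup>2 / 2"
proof -
  have "L2_inner (deriv f) f2 + L2_inner f2 (deriv f) = 0 - l * l"
    using tendsto_mult[OF slope slope] tendsto_mult[OF H2_dirichlet_tendsto(3) H2_dirichlet_tendsto(3)]
    by (intro L2_integration_by_parts H2_dirichlet_has_integral H2_dirichlet_L2) simp_all
  then show ?thesis
    by (simp add: mult.commute power2_eq_square)
qed

lemma L2_inner_second_deriv_exp: "L2_inner f2 (\<lambda>y. exp (- y)) = L2_inner f (\<lambda>y. exp (- y)) - l"
proof -
  have exp_lim: "((\<lambda>y. exp (- y)) \<longlongrightarrow> 1) (at_right (0::real))" "((\<lambda>y. exp (- y)) \<longlongrightarrow> (0::real)) at_top"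
    using tendsto_exp[OF tendsto_minus[OF tendsto_ident_at[of 0 "{0<..}"]]]
      filterlim_compose[OF exp_at_bot filterlim_uminus_at_bot_at_top] by simp_all
  have exp_FTC: "((\<lambda>y. - exp (- y)) has_integral (exp (- y) - exp (- x))) {x..y}" if "0 < x" "x \<le> y" for x y :: real
    by (rule has_integral_deriv_pos[OF _ that]) (auto intro!: derivative_eq_intros)
  have L2_exp': "L2_pos (\<lambda>y. - exp (- y))"
    using L2_pos_lincomb[OF L2_pos_exp L2_pos_exp, of "-1" 0] by simp
  have "L2_inner (deriv f) (\<lambda>y. - exp (- y)) + L2_inner f2 (\<lambda>y. exp (- y)) = 0 - l * 1"
    using tendsto_mult[OF slope exp_lim(1)] tendsto_mult[OF H2_dirichlet_tendsto(3) exp_lim(2)]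
    by (intro L2_integration_by_parts H2_dirichlet_has_integral H2_dirichlet_L2 exp_FTC L2_pos_exp L2_exp')
       simp_all
  moreover have "L2_inner f (\<lambda>y. - exp (- y)) + L2_inner (deriv f) (\<lambda>y. exp (- y)) = 0 - 0 * 1"
    using tendsto_mult[OF H2_dirichlet_tendsto(1) exp_lim(1)] tendsto_mult[OF H2_dirichlet_tendsto(2) exp_lim(2)]
    by (intro L2_integration_by_parts H2_dirichlet_has_integral H2_dirichlet_L2 exp_FTC L2_pos_exp L2_exp')
       simp_all
  ultimately show ?thesis
    by simp
qed

lemma boundary_slope_sq_le: "l\<^sup>2 \<le> L2_norm_sq (deriv f) + L2_norm_sq f2"
proof -
  have "l\<^sup>2 \<le> 2 * \<bar>L2_inner (deriv f) f2\<bar>"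
    using L2_inner_deriv_second_deriv by simp
  also have "\<dots> \<le> 1 * L2_norm_sq (deriv f) + L2_norm_sq f2 / 1"
    by (intro L2_inner_abs_le H2_dirichlet_L2) simp
  finally show ?thesis
    by simp
qed

text \<open>For v = u_t this is half the rate of change of the H^1 energy; the boundary terms of the
  integrations by parts produce the l-terms.\<close>

lemma H1_dissipation_identity:
  assumes v: "L2_pos v"
    and v_eq: "AE y in lborel. 0 < y \<longrightarrow> v y = a * deriv f y + deriv (deriv f) y + c * exp (- y)"
  shows "L2_inner v (\<lambda>y. f y - f2 y) = - L2_norm_sq (deriv f) - L2_norm_sq f2 + a * l\<^sup>2 / 2 + c * l"
proof -
  define p where "p = deriv f"
  define e where "e = (\<lambda>y::real. exp (- y))"
  have L: "L2_pos f" "L2_pos p" "L2_pos f2" "L2_pos e"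
    using H2_dirichlet_L2 L2_pos_exp by (simp_all add: p_def e_def)
  have "AE y in half_line. v y * (f y - f2 y) = (a * p y + f2 y + c * e y) * (f y - f2 y)"
    unfolding AE_restrict_space_iff[OF half_line_sets]
    using v_eq H2_dirichlet_second_deriv_AE by eventually_elim (simp add: p_def e_def)
  then have "L2_inner v (\<lambda>y. f y - f2 y) = integral\<^sup>L half_line (\<lambda>y. (a * p y + f2 y + c * e y) * (f y - f2 y))"
    using integrable_L2_mult[OF v L2_pos_diff[OF L(1,3)]]
      integrable_L2_mult[OF L2_pos_lincomb[OF L2_pos_lincomb[OF L(2,3), of a 1] L(4), of 1 c] L2_pos_diff[OF L(1,3)]]
    by (intro integral_cong_AE) auto
  also have "\<dots> = a * (L2_inner p f - L2_inner p f2) + (L2_inner f2 f - L2_inner f2 f2)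
      + c * (L2_inner e f - L2_inner e f2)"
  proof (rule has_bochner_integral_integral_eq)
    have "(\<lambda>y. (a * p y + f2 y + c * e y) * (f y - f2 y))
        = (\<lambda>y. a * (p y * f y - p y * f2 y) + (f2 y * f y - f2 y * f2 y) + c * (e y * f y - e y * f2 y))"
      by (simp add: fun_eq_iff algebra_simps)
    moreover have "has_bochner_integral half_line
        (\<lambda>y. a * (p y * f y - p y * f2 y) + (f2 y * f y - f2 y * f2 y) + c * (e y * f y - e y * f2 y))
        (a * (L2_inner p f - L2_inner p f2) + (L2_inner f2 f - L2_inner f2 f2) + c * (L2_inner e f - L2_inner e f2))"
      by (intro has_bochner_integral_add has_bochner_integral_diff has_bochner_integral_mult_right
          has_bochner_integral_integrable integrable_L2_mult L)
    ultimately show "has_bochner_integral half_line (\<lambda>y. (a * p y + f2 y + c * e y) * (f y - f2 y))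
        (a * (L2_inner p f - L2_inner p f2) + (L2_inner f2 f - L2_inner f2 f2) + c * (L2_inner e f - L2_inner e f2))"
      by simp
  qed
  also have "L2_inner p f = 0"
    using L2_inner_self_deriv by (simp add: p_def mult.commute)
  also have "L2_inner p f2 = - l\<^sup>2 / 2"
    using L2_inner_deriv_second_deriv by (simp add: p_def)
  also have "L2_inner f2 f = - L2_norm_sq (deriv f)"
    by (rule L2_inner_second_deriv_self)
  also have "L2_inner f2 f2 = L2_norm_sq f2"
    by (simp add: L2_norm_sq_eq power2_eq_square)
  also have "L2_inner e f2 = L2_inner e f - l"
    using L2_inner_second_deriv_exp by (simp add: e_def mult.commute)
  finally show ?thesis
    by (simp add: algebra_simps)
qed

end

end

lemma H1_norm_sq_diff_le:
  assumes f: "H2_dirichlet f f2" and slope: "(deriv f \<longlongrightarrow> l) (at_right 0)"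
    and g: "H2_dirichlet g g2"
  shows "H1_norm_sq f - H1_norm_sq g \<le> 2 * L2_inner (\<lambda>y. f y - g y) (\<lambda>y. f y - f2 y)"
proof -
  note Lf = H2_dirichlet_L2[OF f] and Lg = H2_dirichlet_L2[OF g]
  have Ld: "L2_pos (\<lambda>y. f y - g y)" "L2_pos (\<lambda>y. deriv f y - deriv g y)"
    using Lf Lg by (simp_all add: L2_pos_diff)
  have "L2_inner (deriv f) (\<lambda>y. deriv f y - deriv g y) + L2_inner f2 (\<lambda>y. f y - g y) = 0 - 0"
  proof (rule L2_integration_by_parts)
    show "((\<lambda>y. deriv f y - deriv g y) has_integral ((f y - g y) - (f x - g x))) {x..y}"
      if "0 < x" "x \<le> y" for x y
      using has_integral_diff[OF H2_dirichlet_has_integral(1)[OF f that] H2_dirichlet_has_integral(1)[OF g that]]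
      by (simp add: algebra_simps)
    show "((\<lambda>y. deriv f y * (f y - g y)) \<longlongrightarrow> 0) (at_right 0)"
      using tendsto_mult[OF slope tendsto_diff[OF H2_dirichlet_tendsto(1)[OF f] H2_dirichlet_tendsto(1)[OF g]]] by simp
    show "((\<lambda>y. deriv f y * (f y - g y)) \<longlongrightarrow> 0) at_top"
      using tendsto_mult[OF H2_dirichlet_tendsto(3)[OF f] tendsto_diff[OF H2_dirichlet_tendsto(2)[OF f] H2_dirichlet_tendsto(2)[OF g]]]
      by simp
  qed (use Lf Ld H2_dirichlet_has_integral(2)[OF f] in auto)
  then have "L2_inner (\<lambda>y. deriv f y - deriv g y) (deriv f) = - L2_inner (\<lambda>y. f y - g y) f2"
    by (simp add: mult.commute)
  moreover have "L2_inner (\<lambda>y. f y - g y) (\<lambda>y. f y - f2 y) = L2_inner (\<lambda>y. f y - g y) f - L2_inner (\<lambda>y. f y - g y) f2"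
    by (rule L2_inner_diff_right) (use Lf Ld in auto)
  ultimately show ?thesis
    using L2_norm_sq_diff_le[OF Lf(1) Lg(1)] L2_norm_sq_diff_le[OF Lf(2) Lg(2)]
    unfolding H1_norm_sq_def by linarith
qed

definition left_upper_dini_le :: "(real \<Rightarrow> real) \<Rightarrow> real \<Rightarrow> real \<Rightarrow> bool" where
  "left_upper_dini_le E t D \<longleftrightarrow> (\<forall>e>0. \<forall>\<^sub>F s in at_left t. E t - E s \<le> (D + e) * (t - s))"

lemma left_upper_dini_leI:
  assumes "(G \<longlongrightarrow> D) (at_left t)" "\<forall>\<^sub>F s in at_left t. E t - E s \<le> (t - s) * G s"
  shows "left_upper_dini_le E t D"
  unfolding left_upper_dini_le_def
proof (intro allI impI)
  fix e :: real assume "0 < e"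
  then have "\<forall>\<^sub>F s in at_left t. G s < D + e"
    using assms(1) by (intro order_tendstoD(2)) auto
  moreover have "\<forall>\<^sub>F s in at_left t. s < t"
    by (simp add: eventually_at_filter)
  ultimately show "\<forall>\<^sub>F s in at_left t. E t - E s \<le> (D + e) * (t - s)"
    using assms(2)
  proof eventually_elim
    case (elim s)
    then have "(t - s) * G s \<le> (t - s) * (D + e)"
      by (intro mult_left_mono) auto
    with elim(3) show ?case
      by (metis mult.commute order_trans)
  qed
qed

lemma left_upper_dini_le_add:
  assumes "left_upper_dini_le E1 t D1" "left_upper_dini_le E2 t D2"
  shows "left_upper_dini_le (\<lambda>s. E1 s + E2 s) t (D1 + D2)"
  unfolding left_upper_dini_le_def
proof (intro allI impI)
  fix e :: real assume "0 < e"
  then have "\<forall>\<^sub>F s in at_left t. E1 t - E1 s \<le> (D1 + e / 2) * (t - s)"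
    "\<forall>\<^sub>F s in at_left t. E2 t - E2 s \<le> (D2 + e / 2) * (t - s)"
    using assms by (simp_all add: left_upper_dini_le_def)
  then show "\<forall>\<^sub>F s in at_left t. E1 t + E2 t - (E1 s + E2 s) \<le> (D1 + D2 + e) * (t - s)"
  proof eventually_elim
    case (elim s)
    have "(D1 + e / 2) * (t - s) + (D2 + e / 2) * (t - s) = (D1 + D2 + e) * (t - s)"
      by (simp add: algebra_simps)
    with elim show ?case
      by linarith
  qed
qed

lemma left_upper_dini_le_mono:
  assumes "left_upper_dini_le E t D" "D \<le> D'"
  shows "left_upper_dini_le E t D'"
  unfolding left_upper_dini_le_def
proof (intro allI impI)
  fix e :: real assume "0 < e"
  have "\<forall>\<^sub>F s in at_left t. s < t"
    by (simp add: eventually_at_filter)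
  moreover have "\<forall>\<^sub>F s in at_left t. E t - E s \<le> (D + e) * (t - s)"
    using assms(1) \<open>0 < e\<close> by (simp add: left_upper_dini_le_def)
  ultimately show "\<forall>\<^sub>F s in at_left t. E t - E s \<le> (D' + e) * (t - s)"
  proof eventually_elim
    case (elim s)
    then have "(D + e) * (t - s) \<le> (D' + e) * (t - s)"
      using assms(2) by (intro mult_right_mono) auto
    with elim show ?case
      by linarith
  qed
qed

lemma left_upper_dini_le_witness:
  assumes "left_upper_dini_le E c D" "0 < c" "0 < e"
  obtains s where "0 \<le> s" "s < c" "E c - E s < (D + e) * (c - s)"
proof -
  have "\<forall>\<^sub>F s in at_left c. E c - E s \<le> (D + e / 2) * (c - s)"
    using assms(1,3) by (simp add: left_upper_dini_le_def)
  moreover have "\<forall>\<^sub>F s in at_left c. 0 \<le> s \<and> s < c"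
    using \<open>0 < c\<close> unfolding eventually_at_left_field by (intro exI[of _ 0]) auto
  ultimately have "\<forall>\<^sub>F s in at_left c. 0 \<le> s \<and> s < c \<and> E c - E s \<le> (D + e / 2) * (c - s)"
    by eventually_elim simp
  then obtain s where s: "0 \<le> s" "s < c" "E c - E s \<le> (D + e / 2) * (c - s)"
    using eventually_happens'[OF trivial_limit_at_left_real] by blast
  moreover have "(D + e / 2) * (c - s) < (D + e) * (c - s)"
    using \<open>0 < e\<close> s(2) by (intro mult_strict_right_mono) auto
  ultimately show ?thesis
    using that by fastforce
qed

text \<open>If E T > E 0, then E t - e t with e = (E T - E 0) / (2 T) attains its maximum on [0, T] at
  some c > 0, and the Dini bound at c makes it larger just to the left of c.\<close>

lemma left_upper_dini_le_0_imp_le: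
  fixes E :: "real \<Rightarrow> real"
  assumes "0 < T" "continuous_on {0..T} E"
    and dini: "\<And>t. 0 < t \<Longrightarrow> t \<le> T \<Longrightarrow> left_upper_dini_le E t 0"
  shows "E T \<le> E 0"
proof (rule ccontr)
  assume "\<not> E T \<le> E 0"
  define e where "e = (E T - E 0) / (2 * T)"
  have "0 < e"
    using \<open>\<not> E T \<le> E 0\<close> \<open>0 < T\<close> by (simp add: e_def)
  define \<phi> where "\<phi> t = E t - e * t" for t
  have "continuous_on {0..T} \<phi>"
    unfolding \<phi>_def by (intro continuous_intros assms(2))
  then obtain c where c: "c \<in> {0..T}" "\<And>y. y \<in> {0..T} \<Longrightarrow> \<phi> y \<le> \<phi> c"
    using continuous_attains_sup[of "{0..T}" \<phi>] \<open>0 < T\<close> by auto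
  have "\<phi> 0 < \<phi> T"
    using \<open>\<not> E T \<le> E 0\<close> \<open>0 < T\<close> by (simp add: \<phi>_def e_def field_simps)
  moreover have "\<phi> T \<le> \<phi> c"
    using c(2) \<open>0 < T\<close> by simp
  ultimately have "c \<noteq> 0"
    by auto
  then have "0 < c"
    using c(1) by simp
  have "left_upper_dini_le E c 0"
    using dini \<open>0 < c\<close> c(1) by simp
  then obtain s where s: "0 \<le> s" "s < c" "E c - E s < (0 + e) * (c - s)"
    using left_upper_dini_le_witness \<open>0 < c\<close> \<open>0 < e\<close> by blast
  then have "\<phi> c < \<phi> s"
    by (auto simp: \<phi>_def right_diff_distrib)
  moreover have "s \<in> {0..T}"
    using s c(1) by auto
  ultimately show False
    using c(2) by fastforce
qed

lemma bvp_solution_H2_dirichlet: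
  assumes "bvp_solution \<gamma> \<sigma> u u0" "0 < t"
  obtains f2 where "H2_dirichlet (u t) f2"
proof -
  have H2: "H2_pos (u t)" and lim: "(u t \<longlongrightarrow> 0) (at_right 0)" "(u t \<longlongrightarrow> 0) at_top"
    using assms unfolding bvp_solution_def by auto
  then obtain f2 where "L2_pos f2"
    "\<forall>a b. 0 < a \<longrightarrow> a \<le> b \<longrightarrow> (f2 has_integral (deriv (u t) b - deriv (u t) a)) {a..b}"
    unfolding H2_pos_def by blast
  moreover have "\<forall>y>0. (u t has_real_derivative deriv (u t) y) (at y)" "L2_pos (u t)" "L2_pos (deriv (u t))"
    using H2 unfolding H2_pos_def DERIV_deriv_iff_real_differentiable by blast+
  ultimately have "H2_dirichlet (u t) f2"
    unfolding H2_dirichlet_def using lim by blast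
  then show ?thesis
    by (rule that)
qed

lemma bvp_solution_H1_initial:
  assumes "bvp_solution \<gamma> \<sigma> u u0"
  shows "H1_norm_sq (u 0) = H1_norm_sq u0"
proof -
  have eq: "u 0 y = u0 y" if "0 < y" for y
    using assms that unfolding bvp_solution_def by auto
  have deriv_eq: "deriv (u 0) y = deriv u0 y" if "0 < y" for y
  proof (rule deriv_cong_ev)
    have "\<forall>\<^sub>F x in nhds y. x \<in> {0<..}"
      using that by (intro eventually_nhds_in_open) auto
    then show "\<forall>\<^sub>F x in nhds y. u 0 x = u0 x"
      by eventually_elim (simp add: eq)
  qed simp
  show ?thesis
    unfolding H1_norm_sq_def using L2_norm_sq_cong[OF eq] L2_norm_sq_cong[OF deriv_eq] by simp
qed

lemma bvp_solution_H1_continuous: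
  assumes "bvp_solution \<gamma> \<sigma> u u0"
  shows "continuous_on {0..} (\<lambda>s. H1_norm_sq (u s))"
  unfolding continuous_on_def
proof
  fix t :: real assume "t \<in> {0..}"
  let ?F = "at t within {0..}"
  have H2: "\<And>s. 0 \<le> s \<Longrightarrow> H2_pos (u s)"
    and lim: "((\<lambda>s. H2_norm_sq (\<lambda>y. u s y - u t y)) \<longlongrightarrow> 0) ?F"
    using assms \<open>t \<in> {0..}\<close> unfolding bvp_solution_def by auto
  have ev_nonneg: "\<forall>\<^sub>F s in ?F. 0 \<le> s"
    by (simp add: eventually_at_filter)
  have "((\<lambda>s. L2_norm_sq (\<lambda>y. u s y - u t y)) \<longlongrightarrow> 0) ?F"
    by (rule tendsto_sandwich[OF _ _ tendsto_const lim])
       (auto simp: H2_norm_sq_def L2_norm_sq_nonneg intro!: always_eventually add_nonneg_nonneg)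
  moreover have "((\<lambda>s. L2_norm_sq (deriv (\<lambda>y. u s y - u t y))) \<longlongrightarrow> 0) ?F"
    by (rule tendsto_sandwich[OF _ _ tendsto_const lim])
       (auto simp: H2_norm_sq_def L2_norm_sq_nonneg intro!: always_eventually add_nonneg_nonneg)
  moreover have "\<forall>\<^sub>F s in ?F. L2_norm_sq (deriv (\<lambda>y. u s y - u t y)) = L2_norm_sq (\<lambda>y. deriv (u s) y - deriv (u t) y)"
    using ev_nonneg
  proof eventually_elim
    case (elim s)
    have "deriv (\<lambda>y. u s y - u t y) y = deriv (u s) y - deriv (u t) y" if "0 < y" for y
      using H2[OF elim] H2[of t] \<open>t \<in> {0..}\<close> that
      by (intro DERIV_imp_deriv DERIV_diff) (auto simp: H2_pos_def DERIV_deriv_iff_real_differentiable)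
    then show ?case
      by (rule L2_norm_sq_cong)
  qed
  ultimately have "((\<lambda>s. L2_norm_sq (\<lambda>y. deriv (u s) y - deriv (u t) y)) \<longlongrightarrow> 0) ?F"
    by (simp add: tendsto_cong)
  moreover have "\<forall>\<^sub>F s in ?F. L2_pos (u s)" "\<forall>\<^sub>F s in ?F. L2_pos (deriv (u s))"
    using ev_nonneg by (eventually_elim, simp add: H2[unfolded H2_pos_def])+
  moreover have "L2_pos (u t)" "L2_pos (deriv (u t))"
    using H2[of t] \<open>t \<in> {0..}\<close> by (simp_all add: H2_pos_def)
  ultimately show "((\<lambda>s. H1_norm_sq (u s)) \<longlongrightarrow> H1_norm_sq (u t)) ?F"
    unfolding H1_norm_sq_def
    using \<open>((\<lambda>s. L2_norm_sq (\<lambda>y. u s y - u t y)) \<longlongrightarrow> 0) ?F\<close>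
    by (intro tendsto_add L2_norm_sq_tendsto)
qed

lemma bvp_solution_H1_norm_sq_diff_le:
  assumes u: "bvp_solution \<gamma> \<sigma> u u0" and "0 < s" "s < t"
    and f2: "H2_dirichlet (u t) f2" and slope: "(deriv (u t) \<longlongrightarrow> l) (at_right 0)"
  shows "H1_norm_sq (u t) - H1_norm_sq (u s)
    \<le> (t - s) * (2 * L2_inner (\<lambda>y. (u s y - u t y) / (s - t)) (\<lambda>y. u t y - f2 y))"
proof -
  obtain fs where fs: "H2_dirichlet (u s) fs"
    using bvp_solution_H2_dirichlet[OF u \<open>0 < s\<close>] by blast
  have "H1_norm_sq (u t) - H1_norm_sq (u s) \<le> 2 * L2_inner (\<lambda>y. u t y - u s y) (\<lambda>y. u t y - f2 y)"
    by (rule H1_norm_sq_diff_le[OF f2 slope fs])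
  also have "L2_inner (\<lambda>y. u t y - u s y) (\<lambda>y. u t y - f2 y)
      = integral\<^sup>L half_line (\<lambda>y. (t - s) * ((u s y - u t y) / (s - t) * (u t y - f2 y)))"
    by (rule Bochner_Integration.integral_cong) (use \<open>s < t\<close> in \<open>auto simp: field_simps\<close>)
  also have "\<dots> = (t - s) * L2_inner (\<lambda>y. (u s y - u t y) / (s - t)) (\<lambda>y. u t y - f2 y)"
    by (rule integral_mult_right_zero)
  finally show ?thesis
    by (simp add: mult.left_commute)
qed

lemma bvp_solution_H1_left_upper_dini:
  assumes u: "bvp_solution \<gamma> \<sigma> u u0" and "0 < t"
    and f2: "H2_dirichlet (u t) f2" and slope: "(deriv (u t) \<longlongrightarrow> l) (at_right 0)"
  shows "left_upper_dini_le (\<lambda>s. H1_norm_sq (u s)) t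
           (2 * (- L2_norm_sq (deriv (u t)) - L2_norm_sq f2 + (1 + \<sigma> * \<gamma> t) * l\<^sup>2 / 2 + \<gamma> t * l))"
proof -
  obtain v where v: "L2_pos v" "((\<lambda>s. L2_norm_sq (\<lambda>y. (u s y - u t y) / (s - t) - v y)) \<longlongrightarrow> 0) (at t)"
    "AE y in lborel. 0 < y \<longrightarrow> v y = (1 + \<sigma> * \<gamma> t) * deriv (u t) y + deriv (deriv (u t)) y + \<gamma> t * exp (- y)"
    using u \<open>0 < t\<close> unfolding bvp_solution_def by blast
  define z where "z = (\<lambda>y. u t y - f2 y)"
  have z: "L2_pos z"
    unfolding z_def using H2_dirichlet_L2[OF f2] by (simp add: L2_pos_diff)
  have ev: "\<forall>\<^sub>F s in at_left t. 0 < s \<and> s < t"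
    using \<open>0 < t\<close> unfolding eventually_at_left_field by (intro exI[of _ 0]) auto
  show ?thesis
  proof (rule left_upper_dini_leI)
    have "\<forall>\<^sub>F s in at_left t. L2_pos (\<lambda>y. (u s y - u t y) / (s - t))"
      using ev
    proof eventually_elim
      case (elim s)
      then obtain fs where "H2_dirichlet (u s) fs"
        using bvp_solution_H2_dirichlet[OF u] by blast
      then show ?case
        using H2_dirichlet_L2[OF f2] by (intro L2_pos_divide L2_pos_diff) (simp add: H2_dirichlet_L2)
    qed
    moreover have "((\<lambda>s. L2_norm_sq (\<lambda>y. (u s y - u t y) / (s - t) - v y)) \<longlongrightarrow> 0) (at_left t)"
      using v(2) by (rule tendsto_within_subset) simp
    ultimately have "((\<lambda>s. 2 * L2_inner (\<lambda>y. (u s y - u t y) / (s - t)) z) \<longlongrightarrow> 2 * L2_inner v z) (at_left t)"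
      by (intro tendsto_mult tendsto_const L2_inner_tendsto v(1) z)
    then show "((\<lambda>s. 2 * L2_inner (\<lambda>y. (u s y - u t y) / (s - t)) z) \<longlongrightarrow>
        2 * (- L2_norm_sq (deriv (u t)) - L2_norm_sq f2 + (1 + \<sigma> * \<gamma> t) * l\<^sup>2 / 2 + \<gamma> t * l)) (at_left t)"
      unfolding z_def using H1_dissipation_identity[OF f2 slope v(1,3)] by simp
    show "\<forall>\<^sub>F s in at_left t. H1_norm_sq (u t) - H1_norm_sq (u s)
        \<le> (t - s) * (2 * L2_inner (\<lambda>y. (u s y - u t y) / (s - t)) z)"
      using ev unfolding z_def by eventually_elim (intro bvp_solution_H1_norm_sq_diff_le[OF u _ _ f2 slope], auto)
  qed
qed

lemma bvp_solution_pair_H1_left_upper_dini: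
  assumes up: "bvp_solution \<gamma> 1 up u0p" and um: "bvp_solution \<gamma> (-1) um u0m" and "0 < t"
    and lp: "(deriv (up t) \<longlongrightarrow> l) (at_right 0)" and lm: "(deriv (um t) \<longlongrightarrow> - l) (at_right 0)"
  shows "left_upper_dini_le (\<lambda>s. H1_norm_sq (up s) + H1_norm_sq (um s)) t 0"
proof -
  obtain fp fm where fp: "H2_dirichlet (up t) fp" and fm: "H2_dirichlet (um t) fm"
    using bvp_solution_H2_dirichlet up um \<open>0 < t\<close> by metis
  have "left_upper_dini_le (\<lambda>s. H1_norm_sq (up s) + H1_norm_sq (um s)) t
      (2 * (- L2_norm_sq (deriv (up t)) - L2_norm_sq fp + (1 + 1 * \<gamma> t) * l\<^sup>2 / 2 + \<gamma> t * l)
     + 2 * (- L2_norm_sq (deriv (um t)) - L2_norm_sq fm + (1 + -1 * \<gamma> t) * (- l)\<^sup>2 / 2 + \<gamma> t * - l))"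
    by (intro left_upper_dini_le_add bvp_solution_H1_left_upper_dini[OF up \<open>0 < t\<close> fp lp]
        bvp_solution_H1_left_upper_dini[OF um \<open>0 < t\<close> fm lm])
  then show ?thesis
    by (rule left_upper_dini_le_mono)
       (insert boundary_slope_sq_le[OF fp lp] boundary_slope_sq_le[OF fm lm], simp add: field_simps,
        insert zero_le_power2[of l], linarith)
qed

theorem lemma5p2:
  fixes \<gamma> :: "real \<Rightarrow> real" and up um :: "real \<Rightarrow> real \<Rightarrow> real" and u0p u0m :: "real \<Rightarrow> real"
  assumes "continuous_on {0<..} \<gamma>"
    and "bvp_solution \<gamma> 1 up u0p"
    and "bvp_solution \<gamma> (-1) um u0m"
    and "\<forall>t>0. \<exists>l. (deriv (up t) \<longlongrightarrow> l) (at_right 0) \<and> (deriv (um t) \<longlongrightarrow> - l) (at_right 0)"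
  shows "\<forall>t>0. H1_norm_sq (up t) + H1_norm_sq (um t) \<le> H1_norm_sq u0p + H1_norm_sq u0m"
proof (intro allI impI)
  fix T :: real assume "0 < T"
  define E where "E = (\<lambda>t. H1_norm_sq (up t) + H1_norm_sq (um t))"
  have "continuous_on {0..T} E"
    unfolding E_def using bvp_solution_H1_continuous[OF assms(2)] bvp_solution_H1_continuous[OF assms(3)]
    by (intro continuous_on_add) (auto elim: continuous_on_subset)
  moreover have "left_upper_dini_le E t 0" if "0 < t" for t
    using assms(4) that bvp_solution_pair_H1_left_upper_dini[OF assms(2,3) that] unfolding E_def by blast
  ultimately have "E T \<le> E 0"
    using \<open>0 < T\<close> by (intro left_upper_dini_le_0_imp_le)
  then show "H1_norm_sq (up T) + H1_norm_sq (um T) \<le> H1_norm_sq u0p + H1_norm_sq u0m"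
    unfolding E_def using bvp_solution_H1_initial[OF assms(2)] bvp_solution_H1_initial[OF assms(3)] by simp
qed

end
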